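(* Let $\Omega\subseteq\mathbb{R}^n$ be bounded and measurable, $Y$ a Hilbert space, $S:L^2(\Omega)\to Y$ linear and continuous, $z\in Y$, $u_a,u_b\in L^\infty(\Omega)$, $u_a\le u_b$, $U_{\mathrm{ad}}=\{u\in L^2(\Omega):u_a\le u\le u_b\text{ a.e.}\}$, and let $(S_h)_h$, $\delta$ be as in the context. Let $u^\dagger$ be a solution of $\min_{u\in U_{\mathrm{ad}}}\frac12\|Su-z\|_Y^2$ such that there exists $w\in Y$ with $u^\dagger=P_{U_{\mathrm{ad}}}(S^\ast w)$. Let $h_{\max}>0$ and $\varepsilon_k=0$ for all $k$. For each $h$ let $(u_k^{\mathrm{in}})_k$ be generated by the inexact Bregman algorithm of the context (with this $h$). Then there exists a constant $C$ such that for every $0<h\le h_{\max}$ there exists a stopping index $k(h)$ with \[\sum_{i=1}^{k(h)}H_i\le C<\infty,\qquad H_i:=\delta(h)\Big[\frac{\rho_i}{\alpha_i}+\frac{\gamma_{i-1}}{\alpha_i}+\frac{\gamma_{i-1}\rho_i}{\alpha_i}\Big]+\delta(h)^2\Big[\frac{\rho_i^2}{\alpha_i^2}+\frac{\rho_i^2}{\alpha_i}\Big],\] and $k(h)\to\infty$ as $h\to0$. Furthermore $u_{k(h)}^{\mathrm{in}}\to u^\dagger$ in $L^2(\Omega)$ as $h\to0$.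
   Context: $\|\cdot\|$: $L^2(\Omega)$ norm; $P_{U_{\mathrm{ad}}}$: $L^2$-projection onto $U_{\mathrm{ad}}$. For each $h>0$, $S_h:L^2(\Omega)\to Y$ is linear continuous with finite-dimensional range, and there is a continuous, monotonically increasing $\delta:\mathbb{R}^+\to\mathbb{R}^+$, $\delta(0)=0$, with $\|(S-S_h)u_h\|_Y+\|(S^\ast-S_h^\ast)(S_hu_h-z)\|\le\delta(h)$ for all $h\ge0$, $u_h\in U_{\mathrm{ad}}$. $(\alpha_k)_k$ is a bounded sequence of positive reals, $\gamma_k:=\sum_{j=1}^k\alpha_j^{-1}$ ($\gamma_0=0$), $\rho_k:=\sqrt{\alpha_k^{-1}(1+\alpha_k^{-1})}$. $\mathcal B(\alpha,\lambda,u):=(1+\frac1\alpha)\|u-P_{U_{\mathrm{ad}}}(\frac1\alpha S_h^\ast(z-S_hu)+\lambda)\|$. Inexact Bregman algorithm: $u_0^{\mathrm{in}}=P_{U_{\mathrm{ad}}}(0)$, $\lambda_0^{\mathrm{in}}=0$; for $k\ge1$ find $u_k^{\mathrm{in}}\in U_{\mathrm{ad}}$ with $\mathcal B(\alpha_k,\lambda_{k-1}^{\mathrm{in}},u_k^{\mathrm{in}})\le\varepsilon_k$, then set $\lambda_k^{\mathrm{in}}=\sum_{i=1}^k\frac1{\alpha_i}S_h^\ast(z-S_hu_i^{\mathrm{in}})$. *)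

theory Defs
  imports "HOL-Analysis.Analysis"
begin

text \<open>Elements of L^2(Omega) are represented by real-valued functions on real^'n;
  membership, norm and inner product are taken w.r.t. Lebesgue measure restricted to Omega.
  Equality in L^2 is equality up to L^2-norm zero (a.e.).\<close>

definition L2 :: "(real^'n) set \<Rightarrow> (real^'n \<Rightarrow> real) set" where
  "L2 \<Omega> = {f. f \<in> borel_measurable (lebesgue_on \<Omega>) \<and> integrable (lebesgue_on \<Omega>) (\<lambda>x. (f x)^2)}"

definition L2inner :: "(real^'n) set \<Rightarrow> (real^'n \<Rightarrow> real) \<Rightarrow> (real^'n \<Rightarrow> real) \<Rightarrow> real" where
  "L2inner \<Omega> f g = (LINT x|lebesgue_on \<Omega>. f x * g x)"

definition L2norm :: "(real^'n) set \<Rightarrow> (real^'n \<Rightarrow> real) \<Rightarrow> real" where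
  "L2norm \<Omega> f = sqrt (LINT x|lebesgue_on \<Omega>. (f x)^2)"

definition Linfty :: "(real^'n) set \<Rightarrow> (real^'n \<Rightarrow> real) set" where
  "Linfty \<Omega> = {f. f \<in> borel_measurable (lebesgue_on \<Omega>) \<and>
      (\<exists>M. AE x in lebesgue_on \<Omega>. \<bar>f x\<bar> \<le> M)}"

definition Uad :: "(real^'n) set \<Rightarrow> (real^'n \<Rightarrow> real) \<Rightarrow> (real^'n \<Rightarrow> real) \<Rightarrow> (real^'n \<Rightarrow> real) set" where
  "Uad \<Omega> ua ub = {u \<in> L2 \<Omega>. AE x in lebesgue_on \<Omega>. ua x \<le> u x \<and> u x \<le> ub x}"

definition PUad :: "(real^'n) set \<Rightarrow> (real^'n \<Rightarrow> real) \<Rightarrow> (real^'n \<Rightarrow> real) \<Rightarrow> (real^'n \<Rightarrow> real) \<Rightarrow> (real^'n \<Rightarrow> real)" where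
  "PUad \<Omega> ua ub v = (SOME u. u \<in> Uad \<Omega> ua ub \<and>
      (\<forall>w\<in>Uad \<Omega> ua ub. L2norm \<Omega> (\<lambda>x. v x - u x) \<le> L2norm \<Omega> (\<lambda>x. v x - w x)))"

definition L2_bounded_linear :: "(real^'n) set \<Rightarrow> ((real^'n \<Rightarrow> real) \<Rightarrow> 'y::real_normed_vector) \<Rightarrow> bool" where
  "L2_bounded_linear \<Omega> T \<longleftrightarrow>
     (\<forall>u\<in>L2 \<Omega>. \<forall>v\<in>L2 \<Omega>. T (\<lambda>x. u x + v x) = T u + T v) \<and>
     (\<forall>u\<in>L2 \<Omega>. \<forall>c. T (\<lambda>x. c * u x) = c *\<^sub>R T u) \<and>
     (\<exists>K. \<forall>u\<in>L2 \<Omega>. norm (T u) \<le> K * L2norm \<Omega> u)"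

definition is_adjoint :: "(real^'n) set \<Rightarrow> ((real^'n \<Rightarrow> real) \<Rightarrow> 'y::real_inner) \<Rightarrow> ('y \<Rightarrow> (real^'n \<Rightarrow> real)) \<Rightarrow> bool" where
  "is_adjoint \<Omega> T Tadj \<longleftrightarrow>
     (\<forall>y. Tadj y \<in> L2 \<Omega>) \<and> (\<forall>u\<in>L2 \<Omega>. \<forall>y. inner (T u) y = L2inner \<Omega> u (Tadj y))"

definition gam :: "(nat \<Rightarrow> real) \<Rightarrow> nat \<Rightarrow> real" where
  "gam \<alpha> k = (\<Sum>j=1..k. 1 / \<alpha> j)"

definition rho :: "(nat \<Rightarrow> real) \<Rightarrow> nat \<Rightarrow> real" where
  "rho \<alpha> k = sqrt ((1 / \<alpha> k) * (1 + 1 / \<alpha> k))"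

definition Hterm :: "(nat \<Rightarrow> real) \<Rightarrow> real \<Rightarrow> nat \<Rightarrow> real" where
  "Hterm \<alpha> d i =
     d * (rho \<alpha> i / \<alpha> i + gam \<alpha> (i - 1) / \<alpha> i + gam \<alpha> (i - 1) * rho \<alpha> i / \<alpha> i)
   + d^2 * ((rho \<alpha> i)^2 / (\<alpha> i)^2 + (rho \<alpha> i)^2 / \<alpha> i)"

definition Bfun :: "(real^'n) set \<Rightarrow> (real^'n \<Rightarrow> real) \<Rightarrow> (real^'n \<Rightarrow> real) \<Rightarrow>
    ((real^'n \<Rightarrow> real) \<Rightarrow> 'y::real_inner) \<Rightarrow> ('y \<Rightarrow> (real^'n \<Rightarrow> real)) \<Rightarrow> 'y \<Rightarrow>
    real \<Rightarrow> (real^'n \<Rightarrow> real) \<Rightarrow> (real^'n \<Rightarrow> real) \<Rightarrow> real" where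
  "Bfun \<Omega> ua ub Sh Shadj z a lam u =
     (1 + 1 / a) * L2norm \<Omega> (\<lambda>y. u y - PUad \<Omega> ua ub (\<lambda>x. (1 / a) * Shadj (z - Sh u) x + lam x) y)"

definition lam_in :: "(nat \<Rightarrow> real) \<Rightarrow> ((real^'n \<Rightarrow> real) \<Rightarrow> 'y::real_inner) \<Rightarrow> ('y \<Rightarrow> (real^'n \<Rightarrow> real)) \<Rightarrow> 'y \<Rightarrow>
    (nat \<Rightarrow> (real^'n \<Rightarrow> real)) \<Rightarrow> nat \<Rightarrow> (real^'n \<Rightarrow> real)" where
  "lam_in \<alpha> Sh Shadj z uin k = (\<lambda>x. \<Sum>i=1..k. (1 / \<alpha> i) * Shadj (z - Sh (uin i)) x)"

definition inexact_bregman :: "(real^'n) set \<Rightarrow> (real^'n \<Rightarrow> real) \<Rightarrow> (real^'n \<Rightarrow> real) \<Rightarrow>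
    ((real^'n \<Rightarrow> real) \<Rightarrow> 'y::real_inner) \<Rightarrow> ('y \<Rightarrow> (real^'n \<Rightarrow> real)) \<Rightarrow> 'y \<Rightarrow>
    (nat \<Rightarrow> real) \<Rightarrow> (nat \<Rightarrow> real) \<Rightarrow> (nat \<Rightarrow> (real^'n \<Rightarrow> real)) \<Rightarrow> bool" where
  "inexact_bregman \<Omega> ua ub Sh Shadj z \<alpha> eps uin \<longleftrightarrow>
     uin 0 = PUad \<Omega> ua ub (\<lambda>x. 0) \<and>
     (\<forall>k\<ge>1. uin k \<in> Uad \<Omega> ua ub \<and>
        Bfun \<Omega> ua ub Sh Shadj z (\<alpha> k) (lam_in \<alpha> Sh Shadj z uin (k - 1)) (uin k) \<le> eps k)"

end

theory Submission
  imports Defs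
begin

(*
  Under the source condition u_dag = P(S^* w), and since every iterate is computed exactly
  (eps_k = 0), both u_dag and the iterates u_k are pointwise clips, u_dag = clip (S^* w) and
  u_k = clip lambda_k almost everywhere. Firm nonexpansiveness of clipping bounds
  ||u_k - u_dag||^2 by inner products which, once S is replaced by S_h at the cost delta(h)
  and the optimality of u_dag is used, telescope in the energy
  1/2 ||sum_{i<=k} (1/alpha_i) (S_h u_dag - S_h u_i) - w||^2. This gives
  sum_{k<=K} (1/alpha_k) ||u_k - u_dag||^2 <= 1/2 ||w||^2 + delta(h) G(K) with G independent
  of h. Letting N(h) grow so slowly that delta(h) G(2 N(h)) <= 1 and the H_i up to 2 N(h)
  sum to at most 1, the bound alpha_k <= M yields an index k(h) in (N(h), 2 N(h)] with
  ||u_k(h) - u_dag||^2 <= M (1/2 ||w||^2 + 1) / N(h).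
*)

section \<open>Hilbert-space estimates\<close>

lemma abs_inner_le_of_norm_le:
  fixes x y :: "'a::real_inner"
  assumes "norm x \<le> d"
  shows "\<bar>inner x y\<bar> \<le> d * norm y"
  using Cauchy_Schwarz_ineq2[of x y] mult_right_mono[OF assms norm_ge_zero[of y]] by linarith

lemma perturbed_variational_inequality:
  fixes s0 a0 s a z :: "'a::real_inner"
  assumes "norm (s0 - a0) \<le> d" "norm (s - a) \<le> d" "inner (z - s0) (s0 - s) \<ge> 0"
  shows "- inner (a0 - a) (z - a0) \<le> 2 * d * norm (z - s0) + d * norm (a0 - a)"
proof -
  have "- inner (a0 - a) (z - a0) = - inner (z - s0) (s0 - s) + inner (s0 - a0) (z - s0)
      - inner (s - a) (z - s0) - inner (s0 - a0) (a0 - a)"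
    by (simp add: inner_diff_left inner_diff_right inner_commute)
  then show ?thesis
    using assms abs_inner_le_of_norm_le[OF assms(1), of "z - s0"]
      abs_inner_le_of_norm_le[OF assms(2), of "z - s0"] abs_inner_le_of_norm_le[OF assms(1), of "a0 - a"]
    by linarith
qed

lemma perturbed_inner_shift:
  fixes s0 a0 s a w :: "'a::real_inner"
  assumes "norm (s0 - a0) \<le> d" "norm (s - a) \<le> d"
  shows "- inner (s - s0) w \<le> inner (a0 - a) w + 2 * d * norm w"
proof -
  have "- inner (s - s0) w = inner (a0 - a) w + inner (s0 - a0) w - inner (s - a) w"
    by (simp add: inner_diff_left)
  then show ?thesis
    using abs_inner_le_of_norm_le[OF assms(1), of w] abs_inner_le_of_norm_le[OF assms(2), of w]
    by linarith
qed

lemma telescoping_energy_step: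
  fixes V w f :: "'a::real_inner" and t :: real
  assumes t: "t \<ge> 0" and E: "E \<le> r * norm f + c - inner f (V + t *\<^sub>R f - w)"
  shows "t * E + (norm (V + t *\<^sub>R f - w))\<^sup>2 / 2 \<le> (norm (V - w))\<^sup>2 / 2 + t * c + r\<^sup>2 / 2"
proof -
  define x where "x = V + t *\<^sub>R f - w"
  define y where "y = V - w"
  have xy: "t *\<^sub>R f = x - y" unfolding x_def y_def by simp
  have polar: "- inner (x - y) x = (norm y)\<^sup>2 / 2 - (norm x)\<^sup>2 / 2 - (norm (x - y))\<^sup>2 / 2"
    by (simp add: power2_norm_eq_inner inner_diff_left inner_diff_right inner_commute field_simps)
  have amgm: "r * norm (x - y) \<le> (norm (x - y))\<^sup>2 / 2 + r\<^sup>2 / 2"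
    using sum_squares_bound[of "norm (x - y)" r] by (simp add: algebra_simps)
  have "t * E \<le> r * norm (x - y) + t * c - inner (x - y) x"
    using mult_left_mono[OF E t] t unfolding xy[symmetric] by (simp add: x_def algebra_simps)
  then show ?thesis
    using polar amgm unfolding x_def[symmetric] y_def[symmetric] by linarith
qed

lemma bregman_energy_step:
  fixes s0 a0 s a z w V :: "'a::real_inner"
  assumes t: "t \<ge> 0" and g: "g \<ge> 0"
    and err: "norm (s0 - a0) \<le> d" "norm (s - a) \<le> d" and opt: "inner (z - s0) (s0 - s) \<ge> 0"
    and E: "E \<le> - g * inner (a0 - a) (z - a0) - inner (a0 - a) (V + t *\<^sub>R (a0 - a)) - inner (s - s0) w"
  shows "t * E + (norm (V + t *\<^sub>R (a0 - a) - w))\<^sup>2 / 2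
    \<le> (norm (V - w))\<^sup>2 / 2 + t * (2 * d * (g * norm (z - s0) + norm w)) + (g * d)\<^sup>2 / 2"
proof (rule telescoping_energy_step[OF t])
  show "E \<le> g * d * norm (a0 - a) + 2 * d * (g * norm (z - s0) + norm w)
      - inner (a0 - a) (V + t *\<^sub>R (a0 - a) - w)"
    using E mult_left_mono[OF perturbed_variational_inequality[OF err opt] g]
      perturbed_inner_shift[OF err, of w]
    by (simp add: inner_diff_right algebra_simps)
qed

lemma telescoped_energy_estimate:
  fixes Sy Ay :: "nat \<Rightarrow> 'a::real_inner" and s0 a0 z w :: 'a and \<tau> E :: "nat \<Rightarrow> real"
  assumes \<tau>: "\<And>k. k \<ge> 1 \<Longrightarrow> \<tau> k \<ge> 0"
    and err0: "norm (s0 - a0) \<le> d" and err: "\<And>k. k \<ge> 1 \<Longrightarrow> norm (Sy k - Ay k) \<le> d"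
    and opt: "\<And>k. k \<ge> 1 \<Longrightarrow> inner (z - s0) (s0 - Sy k) \<ge> 0"
    and E: "\<And>k. k \<ge> 1 \<Longrightarrow>
      E k \<le> (\<Sum>i=1..k. \<tau> i * inner (Ay k - a0) (z - Ay i)) - inner (Sy k - s0) w"
  shows "(\<Sum>k=1..K. \<tau> k * E k) \<le> (norm w)\<^sup>2 / 2
    + (\<Sum>k=1..K. 2 * d * \<tau> k * ((\<Sum>j=1..k. \<tau> j) * norm (z - s0) + norm w) + ((\<Sum>j=1..k. \<tau> j) * d)\<^sup>2 / 2)"
proof -
  define V where "V K = (\<Sum>i=1..K. \<tau> i *\<^sub>R (a0 - Ay i))" for K
  define R where "R K = (\<Sum>k=1..K. 2 * d * \<tau> k * ((\<Sum>j=1..k. \<tau> j) * norm (z - s0) + norm w)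
    + ((\<Sum>j=1..k. \<tau> j) * d)\<^sup>2 / 2)" for K
  have "(\<Sum>k=1..K. \<tau> k * E k) + (norm (V K - w))\<^sup>2 / 2 \<le> (norm w)\<^sup>2 / 2 + R K" for K
  proof (induction K)
    case 0
    then show ?case by (simp add: V_def R_def)
  next
    case (Suc K)
    define k where "k = Suc K"
    define g where "g = (\<Sum>j=1..k. \<tau> j)"
    have k: "k \<ge> 1" by (simp add: k_def)
    have Vk: "V k = V K + \<tau> k *\<^sub>R (a0 - Ay k)" by (simp add: V_def k_def)
    have "\<tau> i * inner (Ay k - a0) (z - Ay i)
        = - (\<tau> i * inner (a0 - Ay k) (z - a0)) - inner (a0 - Ay k) (\<tau> i *\<^sub>R (a0 - Ay i))" for i
      by (simp add: inner_diff_right inner_diff_left algebra_simps)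
    then have "(\<Sum>i=1..k. \<tau> i * inner (Ay k - a0) (z - Ay i))
        = - g * inner (a0 - Ay k) (z - a0) - inner (a0 - Ay k) (V k)"
      by (simp add: g_def V_def sum_subtractf sum_negf inner_sum_right sum_distrib_right)
    then have "\<tau> k * E k + (norm (V k - w))\<^sup>2 / 2 \<le> (norm (V K - w))\<^sup>2 / 2
        + \<tau> k * (2 * d * (g * norm (z - s0) + norm w)) + (g * d)\<^sup>2 / 2"
      unfolding Vk using E[OF k]
      by (intro bregman_energy_step[OF \<tau>[OF k] _ err0 err[OF k] opt[OF k]])
        (auto simp: g_def \<tau> intro: sum_nonneg)
    moreover have "R (Suc K) = R K + \<tau> k * (2 * d * (g * norm (z - s0) + norm w)) + (g * d)\<^sup>2 / 2"
      by (simp add: R_def g_def k_def)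
    ultimately show ?case
      using Suc.IH by (simp add: k_def)
  qed
  from this[of K] show ?thesis
    unfolding R_def using zero_le_power2[of "norm (V K - w)"] by linarith
qed

lemma inner_nonneg_of_norm_le_segment:
  fixes b e :: "'a::real_inner"
  assumes "\<And>t. 0 < t \<Longrightarrow> t \<le> 1 \<Longrightarrow> norm b \<le> norm (b + t *\<^sub>R e)"
  shows "inner b e \<ge> 0"
proof -
  have "2 * inner b e + t * (norm e)\<^sup>2 \<ge> 0" if t: "0 < t" "t \<le> 1" for t
  proof -
    have "(norm b)\<^sup>2 \<le> (norm (b + t *\<^sub>R e))\<^sup>2"
      using assms[OF t] by (simp add: power_mono)
    also have "\<dots> = (norm b)\<^sup>2 + t * (2 * inner b e + t * (norm e)\<^sup>2)"
      unfolding power2_norm_eq_inner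
      by (simp add: inner_add_left inner_add_right inner_commute algebra_simps power2_eq_square)
    finally have "0 \<le> t * (2 * inner b e + t * (norm e)\<^sup>2)" by simp
    then show ?thesis using t by (simp add: zero_le_mult_iff)
  qed
  then have "eventually (\<lambda>t. 2 * inner b e + t * (norm e)\<^sup>2 \<ge> 0) (at_right 0)"
    unfolding eventually_at_right_field by (intro exI[of _ 1]) auto
  moreover have "((\<lambda>t. 2 * inner b e + t * (norm e)\<^sup>2) \<longlongrightarrow> 2 * inner b e) (at_right 0)"
    by (auto intro!: tendsto_eq_intros)
  ultimately have "2 * inner b e \<ge> 0"
    by (intro tendsto_lowerbound) auto
  then show ?thesis by simp
qed

section \<open>Clipping to an interval\<close>

definition clip :: "('a \<Rightarrow> real) \<Rightarrow> ('a \<Rightarrow> real) \<Rightarrow> ('a \<Rightarrow> real) \<Rightarrow> 'a \<Rightarrow> real" where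
  "clip ua ub v x = max (ua x) (min (ub x) (v x))"

lemma clip_nearest:
  "(a::real) \<le> w \<Longrightarrow> w \<le> b \<Longrightarrow> (v - max a (min b v))\<^sup>2 \<le> (v - w)\<^sup>2"
  by (rule abs_le_square_iff[THEN iffD1]) (auto simp: max_def min_def abs_if)

lemma clip_nearest_unique:
  "(a::real) \<le> u \<Longrightarrow> u \<le> b \<Longrightarrow> (v - u)\<^sup>2 \<le> (v - max a (min b v))\<^sup>2 \<Longrightarrow> u = max a (min b v)"
  by (drule abs_le_square_iff[THEN iffD2]) (auto simp: max_def min_def abs_if split: if_splits)

lemma clip_firmly_nonexpansive:
  fixes a b p q :: real
  assumes "a \<le> b"
  shows "(max a (min b p) - max a (min b q))\<^sup>2 \<le> (p - q) * (max a (min b p) - max a (min b q))"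
proof -
  define c where "c x = max a (min b x)" for x
  have mono: "c x \<le> c y" "x - c x \<le> y - c y" if "x \<le> y" for x y
    using assms that by (auto simp: c_def max_def min_def)
  have "0 \<le> (c p - c q) * ((p - c p) - (q - c q))"
  proof (cases "p \<le> q")
    case True
    then show ?thesis using mono[OF True] by (intro mult_nonpos_nonpos) auto
  next
    case False
    then show ?thesis using mono[of q p] by (intro mult_nonneg_nonneg) auto
  qed
  then show ?thesis by (simp add: c_def[symmetric] power2_eq_square algebra_simps)
qed

lemma clip_abs_le: "(a::real) \<le> w \<Longrightarrow> w \<le> b \<Longrightarrow> \<bar>max a (min b v)\<bar> \<le> \<bar>v\<bar> + \<bar>w\<bar>"
  by (auto simp: max_def min_def abs_if)

lemma segment_in_interval:
  fixes a b p q t :: real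
  assumes "a \<le> p" "p \<le> b" "a \<le> q" "q \<le> b" "0 \<le> t" "t \<le> 1"
  shows "a \<le> p + t * (q - p) \<and> p + t * (q - p) \<le> b"
proof -
  have "p + t * (q - p) = (1 - t) * p + t * q" by (simp add: algebra_simps)
  moreover have "(1 - t) * p + t * q \<le> b"
    using assms by (intro convex_bound_le) auto
  moreover have "(1 - t) * (- p) + t * (- q) \<le> - a"
    using assms by (intro convex_bound_le) auto
  ultimately show ?thesis by simp
qed

lemma L2_integrable_mult:
  assumes "f \<in> L2 \<Omega>" "g \<in> L2 \<Omega>"
  shows "integrable (lebesgue_on \<Omega>) (\<lambda>x. f x * g x)"
proof (rule Bochner_Integration.integrable_bound)
  show "integrable (lebesgue_on \<Omega>) (\<lambda>x. (f x)\<^sup>2 + (g x)\<^sup>2)"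
    using assms by (auto simp: L2_def)
  show "AE x in lebesgue_on \<Omega>. norm (f x * g x) \<le> norm ((f x)\<^sup>2 + (g x)\<^sup>2)"
  proof (intro AE_I2)
    fix x
    show "norm (f x * g x) \<le> norm ((f x)\<^sup>2 + (g x)\<^sup>2)"
      using sum_squares_bound[of "f x" "g x"] sum_squares_bound[of "- f x" "g x"] by (simp add: abs_if)
  qed
qed (use assms in \<open>auto simp: L2_def\<close>)

lemma L2_add:
  assumes "f \<in> L2 \<Omega>" "g \<in> L2 \<Omega>"
  shows "(\<lambda>x. f x + g x) \<in> L2 \<Omega>"
proof -
  have "integrable (lebesgue_on \<Omega>) (\<lambda>x. (f x + g x)\<^sup>2)"
    unfolding power2_sum using assms L2_integrable_mult[OF assms]
    by (auto simp: L2_def mult.assoc)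
  then show ?thesis using assms by (auto simp: L2_def)
qed

lemma L2_cmult:
  assumes "f \<in> L2 \<Omega>"
  shows "(\<lambda>x. c * f x) \<in> L2 \<Omega>"
  using assms by (auto simp: L2_def power_mult_distrib)

lemma L2_diff:
  assumes "f \<in> L2 \<Omega>" "g \<in> L2 \<Omega>"
  shows "(\<lambda>x. f x - g x) \<in> L2 \<Omega>"
  using L2_add[OF assms(1) L2_cmult[OF assms(2), of "-1"]] by simp

lemma L2_sum:
  assumes "\<And>i. i \<in> I \<Longrightarrow> f i \<in> L2 \<Omega>"
  shows "(\<lambda>x. \<Sum>i\<in>I. c i * f i x) \<in> L2 \<Omega>"
  using assms
proof (induction I rule: infinite_finite_induct)
  case (insert i I)
  then show ?case using L2_add[OF L2_cmult[of "f i" \<Omega> "c i"]] by simp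
qed (simp_all add: L2_def)

lemma L2norm_nonneg: "L2norm \<Omega> f \<ge> 0"
  unfolding L2norm_def by (simp add: integral_nonneg_AE)

lemma L2norm_power2: "(L2norm \<Omega> f)\<^sup>2 = (LINT x|lebesgue_on \<Omega>. (f x)\<^sup>2)"
  unfolding L2norm_def by (simp add: integral_nonneg_AE)

lemma AE_eq_0_of_L2norm_le_0:
  assumes "f \<in> L2 \<Omega>" "L2norm \<Omega> f \<le> 0"
  shows "AE x in lebesgue_on \<Omega>. f x = 0"
proof -
  have "(LINT x|lebesgue_on \<Omega>. (f x)\<^sup>2) = 0"
    using assms(2) L2norm_nonneg[of \<Omega> f] L2norm_power2[of \<Omega> f] by simp
  then show ?thesis
    using integral_nonneg_eq_0_iff_AE[of "lebesgue_on \<Omega>" "\<lambda>x. (f x)\<^sup>2"] assms(1)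
    by (simp add: L2_def)
qed

lemma AE_eq_of_integral_le:
  fixes f g :: "'a \<Rightarrow> real"
  assumes "integrable M f" "integrable M g" "AE x in M. f x \<le> g x" "integral\<^sup>L M g \<le> integral\<^sup>L M f"
  shows "AE x in M. f x = g x"
proof -
  have "integral\<^sup>L M (\<lambda>x. g x - f x) = 0"
    using assms integral_mono_AE[of M f g] by (simp add: Bochner_Integration.integral_diff)
  then have "AE x in M. g x - f x = 0"
    using assms by (subst integral_nonneg_eq_0_iff_AE[symmetric]) auto
  then show ?thesis by auto
qed

lemma L2_bounded_linear_add:
  "L2_bounded_linear \<Omega> T \<Longrightarrow> u \<in> L2 \<Omega> \<Longrightarrow> v \<in> L2 \<Omega> \<Longrightarrow> T (\<lambda>x. u x + v x) = T u + T v"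
  unfolding L2_bounded_linear_def by blast

lemma L2_bounded_linear_cmult:
  "L2_bounded_linear \<Omega> T \<Longrightarrow> u \<in> L2 \<Omega> \<Longrightarrow> T (\<lambda>x. c * u x) = c *\<^sub>R T u"
  unfolding L2_bounded_linear_def by blast

lemma L2_bounded_linear_diff:
  assumes T: "L2_bounded_linear \<Omega> T" and u: "u \<in> L2 \<Omega>" and v: "v \<in> L2 \<Omega>"
  shows "T (\<lambda>x. u x - v x) = T u - T v"
  using L2_bounded_linear_add[OF T u L2_cmult[OF v, of "-1"]] L2_bounded_linear_cmult[OF T v, of "-1"]
  by simp

lemma L2_bounded_linear_segment:
  assumes T: "L2_bounded_linear \<Omega> T" and u: "u \<in> L2 \<Omega>" and v: "v \<in> L2 \<Omega>"
  shows "T (\<lambda>x. u x + t * (v x - u x)) = T u + t *\<^sub>R (T v - T u)"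
  using L2_bounded_linear_add[OF T u L2_cmult[OF L2_diff[OF v u]]]
    L2_bounded_linear_cmult[OF T L2_diff[OF v u]] L2_bounded_linear_diff[OF T v u]
  by simp

lemma is_adjoint_integral:
  "is_adjoint \<Omega> T Tadj \<Longrightarrow> u \<in> L2 \<Omega> \<Longrightarrow> (LINT x|lebesgue_on \<Omega>. u x * Tadj y x) = inner (T u) y"
  unfolding is_adjoint_def L2inner_def by simp

section \<open>The projection onto the admissible set\<close>

lemma clip_in_Uad:
  assumes v: "v \<in> L2 \<Omega>" and u0: "u0 \<in> Uad \<Omega> ua ub"
    and ua: "ua \<in> borel_measurable (lebesgue_on \<Omega>)" and ub: "ub \<in> borel_measurable (lebesgue_on \<Omega>)"
  shows "clip ua ub v \<in> Uad \<Omega> ua ub"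
proof -
  have u0L: "u0 \<in> L2 \<Omega>" and u0_AE: "AE x in lebesgue_on \<Omega>. ua x \<le> u0 x \<and> u0 x \<le> ub x"
    using u0 by (auto simp: Uad_def)
  have cm: "clip ua ub v \<in> borel_measurable (lebesgue_on \<Omega>)"
    using ua ub v unfolding clip_def L2_def by auto
  have "integrable (lebesgue_on \<Omega>) (\<lambda>x. (clip ua ub v x)\<^sup>2)"
  proof (rule Bochner_Integration.integrable_bound)
    show "integrable (lebesgue_on \<Omega>) (\<lambda>x. 2 * (v x)\<^sup>2 + 2 * (u0 x)\<^sup>2)"
      using v u0L by (auto simp: L2_def)
    show "AE x in lebesgue_on \<Omega>. norm ((clip ua ub v x)\<^sup>2) \<le> norm (2 * (v x)\<^sup>2 + 2 * (u0 x)\<^sup>2)"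
      using u0_AE
    proof eventually_elim
      case (elim x)
      then have "(clip ua ub v x)\<^sup>2 \<le> (\<bar>v x\<bar> + \<bar>u0 x\<bar>)\<^sup>2"
        using clip_abs_le[of "ua x" "u0 x" "ub x" "v x"]
        by (intro abs_le_square_iff[THEN iffD1]) (simp add: clip_def)
      also have "\<dots> \<le> 2 * (v x)\<^sup>2 + 2 * (u0 x)\<^sup>2"
        using sum_squares_bound[of "\<bar>v x\<bar>" "\<bar>u0 x\<bar>"] by (simp add: power2_sum)
      finally show ?case by simp
    qed
  qed (use cm in simp)
  moreover have "AE x in lebesgue_on \<Omega>. ua x \<le> clip ua ub v x \<and> clip ua ub v x \<le> ub x"
    using u0_AE by eventually_elim (simp add: clip_def)
  ultimately show ?thesis using cm by (simp add: Uad_def L2_def)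
qed

lemma PUad_eq_clip_AE:
  assumes v: "v \<in> L2 \<Omega>" and u0: "u0 \<in> Uad \<Omega> ua ub"
    and ua: "ua \<in> borel_measurable (lebesgue_on \<Omega>)" and ub: "ub \<in> borel_measurable (lebesgue_on \<Omega>)"
  shows "PUad \<Omega> ua ub v \<in> Uad \<Omega> ua ub" "AE x in lebesgue_on \<Omega>. PUad \<Omega> ua ub v x = clip ua ub v x"
proof -
  define c where "c = clip ua ub v"
  define P where "P = PUad \<Omega> ua ub v"
  have cU: "c \<in> Uad \<Omega> ua ub" unfolding c_def using clip_in_Uad[OF v u0 ua ub] .
  have dist_sq_integrable: "integrable (lebesgue_on \<Omega>) (\<lambda>x. (v x - w x)\<^sup>2)" if "w \<in> Uad \<Omega> ua ub" for w
    using L2_diff[OF v, of w] that by (simp add: Uad_def L2_def)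
  have c_nearest: "L2norm \<Omega> (\<lambda>x. v x - c x) \<le> L2norm \<Omega> (\<lambda>x. v x - w x)" if w: "w \<in> Uad \<Omega> ua ub" for w
  proof -
    have "AE x in lebesgue_on \<Omega>. (v x - c x)\<^sup>2 \<le> (v x - w x)\<^sup>2"
      using w unfolding Uad_def by (auto simp: c_def clip_def clip_nearest elim!: AE_mp)
    then show ?thesis
      unfolding L2norm_def using dist_sq_integrable[OF cU] dist_sq_integrable[OF w]
      by (simp add: integral_mono_AE)
  qed
  have "P \<in> Uad \<Omega> ua ub \<and> (\<forall>w\<in>Uad \<Omega> ua ub. L2norm \<Omega> (\<lambda>x. v x - P x) \<le> L2norm \<Omega> (\<lambda>x. v x - w x))"
    unfolding P_def PUad_def by (rule someI[of _ c]) (use cU c_nearest in blast)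
  then have PU: "P \<in> Uad \<Omega> ua ub" and "L2norm \<Omega> (\<lambda>x. v x - P x) \<le> L2norm \<Omega> (\<lambda>x. v x - c x)"
    using cU by auto
  then have "(LINT x|lebesgue_on \<Omega>. (v x - P x)\<^sup>2) \<le> (LINT x|lebesgue_on \<Omega>. (v x - c x)\<^sup>2)"
    by (simp add: L2norm_def)
  moreover have "AE x in lebesgue_on \<Omega>. (v x - c x)\<^sup>2 \<le> (v x - P x)\<^sup>2"
    using PU unfolding Uad_def by (auto simp: c_def clip_def clip_nearest elim!: AE_mp)
  ultimately have "AE x in lebesgue_on \<Omega>. (v x - c x)\<^sup>2 = (v x - P x)\<^sup>2"
    using dist_sq_integrable[OF cU] dist_sq_integrable[OF PU] by (intro AE_eq_of_integral_le) auto
  moreover have "AE x in lebesgue_on \<Omega>. ua x \<le> P x \<and> P x \<le> ub x"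
    using PU by (simp add: Uad_def)
  ultimately show "AE x in lebesgue_on \<Omega>. P x = clip ua ub v x"
    by eventually_elim (simp add: c_def clip_def clip_nearest_unique)
  show "P \<in> Uad \<Omega> ua ub" using PU .
qed

lemma AE_eq_clip_of_L2norm_le_0:
  assumes u: "u \<in> L2 \<Omega>" and v: "v \<in> L2 \<Omega>" and u0: "u0 \<in> Uad \<Omega> ua ub"
    and ua: "ua \<in> borel_measurable (lebesgue_on \<Omega>)" and ub: "ub \<in> borel_measurable (lebesgue_on \<Omega>)"
    and "L2norm \<Omega> (\<lambda>x. u x - PUad \<Omega> ua ub v x) \<le> 0"
  shows "AE x in lebesgue_on \<Omega>. u x = clip ua ub v x"
proof -
  note P = PUad_eq_clip_AE[OF v u0 ua ub]
  have "AE x in lebesgue_on \<Omega>. u x - PUad \<Omega> ua ub v x = 0"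
    using P(1) by (intro AE_eq_0_of_L2norm_le_0 L2_diff u assms(6)) (simp add: Uad_def)
  with P(2) show ?thesis by eventually_elim simp
qed

lemma L2norm_power2_le_of_clip_AE:
  assumes u: "u \<in> L2 \<Omega>" "u' \<in> L2 \<Omega>" and v: "v \<in> L2 \<Omega>" "v' \<in> L2 \<Omega>"
    and ab: "AE x in lebesgue_on \<Omega>. ua x \<le> ub x"
    and "AE x in lebesgue_on \<Omega>. u x = clip ua ub v x" "AE x in lebesgue_on \<Omega>. u' x = clip ua ub v' x"
  shows "(L2norm \<Omega> (\<lambda>x. u x - u' x))\<^sup>2 \<le> (LINT x|lebesgue_on \<Omega>. (v x - v' x) * (u x - u' x))"
proof -
  have "AE x in lebesgue_on \<Omega>. (u x - u' x)\<^sup>2 \<le> (v x - v' x) * (u x - u' x)"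
    using assms(5-7) by eventually_elim (simp add: clip_def clip_firmly_nonexpansive)
  then show ?thesis
    unfolding L2norm_power2 using L2_diff[OF u] L2_integrable_mult[OF L2_diff[OF v] L2_diff[OF u]]
    by (intro integral_mono_AE) (auto simp: L2_def)
qed

lemma Uad_segment:
  assumes "u \<in> Uad \<Omega> ua ub" "v \<in> Uad \<Omega> ua ub" "0 \<le> t" "t \<le> 1"
  shows "(\<lambda>x. u x + t * (v x - u x)) \<in> Uad \<Omega> ua ub"
proof -
  have "AE x in lebesgue_on \<Omega>. ua x \<le> u x \<and> u x \<le> ub x" "AE x in lebesgue_on \<Omega>. ua x \<le> v x \<and> v x \<le> ub x"
    using assms(1,2) by (simp_all add: Uad_def)
  then have "AE x in lebesgue_on \<Omega>. ua x \<le> u x + t * (v x - u x) \<and> u x + t * (v x - u x) \<le> ub x"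
    by eventually_elim (intro segment_in_interval assms(3,4); simp)
  moreover have "(\<lambda>x. u x + t * (v x - u x)) \<in> L2 \<Omega>"
    using assms by (intro L2_add L2_cmult L2_diff) (auto simp: Uad_def)
  ultimately show ?thesis by (simp add: Uad_def)
qed

lemma minimizer_variational_inequality:
  fixes S :: "(real^'n \<Rightarrow> real) \<Rightarrow> 'y::real_inner"
  assumes S: "L2_bounded_linear \<Omega> S" and ud: "udag \<in> Uad \<Omega> ua ub" and u: "u \<in> Uad \<Omega> ua ub"
    and min: "\<And>u. u \<in> Uad \<Omega> ua ub \<Longrightarrow> norm (S udag - z) \<le> norm (S u - z)"
  shows "inner (z - S udag) (S udag - S u) \<ge> 0"
proof -
  have "inner (S udag - z) (S u - S udag) \<ge> 0"
  proof (rule inner_nonneg_of_norm_le_segment)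
    fix t :: real assume "0 < t" "t \<le> 1"
    then have "norm (S udag - z) \<le> norm (S (\<lambda>x. udag x + t * (u x - udag x)) - z)"
      using min Uad_segment[OF ud u] by simp
    also have "S (\<lambda>x. udag x + t * (u x - udag x)) = S udag + t *\<^sub>R (S u - S udag)"
      by (rule L2_bounded_linear_segment[OF S]) (use ud u in \<open>simp_all add: Uad_def\<close>)
    also have "S udag + t *\<^sub>R (S u - S udag) - z = S udag - z + t *\<^sub>R (S u - S udag)"
      by simp
    finally show "norm (S udag - z) \<le> norm (S udag - z + t *\<^sub>R (S u - S udag))" .
  qed
  then show ?thesis by (simp add: inner_diff_left inner_diff_right inner_commute algebra_simps)
qed

section \<open>Error of the Bregman iterates\<close>

lemma lam_in_L2: "is_adjoint \<Omega> A Aadj \<Longrightarrow> lam_in \<alpha> A Aadj z uin k \<in> L2 \<Omega>"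
  unfolding lam_in_def is_adjoint_def by (intro L2_sum) simp

lemma lam_in_Suc:
  "lam_in \<alpha> A Aadj z uin (Suc k) = (\<lambda>x. 1 / \<alpha> (Suc k) * Aadj (z - A (uin (Suc k))) x + lam_in \<alpha> A Aadj z uin k x)"
  unfolding lam_in_def by (simp add: add.commute)

lemma integral_mult_lam_in:
  assumes A: "is_adjoint \<Omega> A Aadj" and d: "d \<in> L2 \<Omega>"
  shows "(LINT x|lebesgue_on \<Omega>. d x * lam_in \<alpha> A Aadj z uin k x)
    = (\<Sum>i=1..k. 1 / \<alpha> i * inner (A d) (z - A (uin i)))"
proof -
  have "(LINT x|lebesgue_on \<Omega>. d x * lam_in \<alpha> A Aadj z uin k x)
      = (\<Sum>i=1..k. 1 / \<alpha> i * (LINT x|lebesgue_on \<Omega>. d x * Aadj (z - A (uin i)) x))"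
    unfolding lam_in_def sum_distrib_left
    using L2_integrable_mult[OF d, of "Aadj _"] A
    by (subst Bochner_Integration.integral_sum) (auto simp: is_adjoint_def mult.left_commute)
  then show ?thesis using is_adjoint_integral[OF A d] by simp
qed

lemma bregman_iterate_eq_clip_AE:
  assumes A: "is_adjoint \<Omega> A Aadj" and u0: "u0 \<in> Uad \<Omega> ua ub"
    and ua: "ua \<in> borel_measurable (lebesgue_on \<Omega>)" and ub: "ub \<in> borel_measurable (lebesgue_on \<Omega>)"
    and \<alpha>: "\<alpha> k > 0" and alg: "inexact_bregman \<Omega> ua ub A Aadj z \<alpha> (\<lambda>k. 0) uin" and k: "k \<ge> 1"
  shows "uin k \<in> Uad \<Omega> ua ub" "AE x in lebesgue_on \<Omega>. uin k x = clip ua ub (lam_in \<alpha> A Aadj z uin k) x"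
proof -
  show uU: "uin k \<in> Uad \<Omega> ua ub"
    using alg k by (simp add: inexact_bregman_def)
  obtain k' where k': "k = Suc k'" using k by (cases k) auto
  have "Bfun \<Omega> ua ub A Aadj z (\<alpha> k) (lam_in \<alpha> A Aadj z uin (k - 1)) (uin k) \<le> 0"
    using alg k by (simp add: inexact_bregman_def)
  then have "(1 + 1 / \<alpha> k) * L2norm \<Omega> (\<lambda>x. uin k x - PUad \<Omega> ua ub (lam_in \<alpha> A Aadj z uin k) x) \<le> 0"
    unfolding Bfun_def k' lam_in_Suc by simp
  moreover have "1 + 1 / \<alpha> k > 0" using \<alpha> by (simp add: add_pos_pos)
  ultimately have "L2norm \<Omega> (\<lambda>x. uin k x - PUad \<Omega> ua ub (lam_in \<alpha> A Aadj z uin k) x) \<le> 0"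
    by (simp add: mult_le_0_iff)
  then show "AE x in lebesgue_on \<Omega>. uin k x = clip ua ub (lam_in \<alpha> A Aadj z uin k) x"
    using uU by (intro AE_eq_clip_of_L2norm_le_0 lam_in_L2[OF A] u0 ua ub) (simp_all add: Uad_def)
qed

lemma bregman_iterate_error:
  fixes S A :: "(real^'n \<Rightarrow> real) \<Rightarrow> 'y::real_inner"
  assumes S: "L2_bounded_linear \<Omega> S" "is_adjoint \<Omega> S Sadj"
    and A: "L2_bounded_linear \<Omega> A" "is_adjoint \<Omega> A Aadj"
    and ua: "ua \<in> borel_measurable (lebesgue_on \<Omega>)" and ub: "ub \<in> borel_measurable (lebesgue_on \<Omega>)"
    and ab: "AE x in lebesgue_on \<Omega>. ua x \<le> ub x"
    and ud: "udag \<in> Uad \<Omega> ua ub" and src: "AE x in lebesgue_on \<Omega>. udag x = clip ua ub (Sadj w) x"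
    and \<alpha>: "\<alpha> k > 0" and alg: "inexact_bregman \<Omega> ua ub A Aadj z \<alpha> (\<lambda>k. 0) uin" and k: "k \<ge> 1"
  shows "(L2norm \<Omega> (\<lambda>x. uin k x - udag x))\<^sup>2 \<le>
    (\<Sum>i=1..k. 1 / \<alpha> i * inner (A (uin k) - A udag) (z - A (uin i))) - inner (S (uin k) - S udag) w"
proof -
  define lam where "lam = lam_in \<alpha> A Aadj z uin k"
  define d where "d = (\<lambda>x. uin k x - udag x)"
  note iterate = bregman_iterate_eq_clip_AE[OF A(2) ud ua ub \<alpha> alg k]
  have L2: "uin k \<in> L2 \<Omega>" "udag \<in> L2 \<Omega>" "lam \<in> L2 \<Omega>" "Sadj w \<in> L2 \<Omega>"
    using iterate(1) ud lam_in_L2[OF A(2)] S(2) by (auto simp: Uad_def lam_def is_adjoint_def)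
  have dL: "d \<in> L2 \<Omega>" unfolding d_def using L2(1,2) by (rule L2_diff)
  have "(L2norm \<Omega> d)\<^sup>2 \<le> (LINT x|lebesgue_on \<Omega>. (lam x - Sadj w x) * d x)"
    unfolding d_def using L2 ab iterate(2) src by (intro L2norm_power2_le_of_clip_AE) (simp_all add: lam_def)
  also have "\<dots> = (LINT x|lebesgue_on \<Omega>. d x * lam x) - (LINT x|lebesgue_on \<Omega>. d x * Sadj w x)"
    using L2_integrable_mult[OF dL L2(3)] L2_integrable_mult[OF dL L2(4)]
    by (simp add: algebra_simps flip: Bochner_Integration.integral_diff)
  also have "\<dots> = (\<Sum>i=1..k. 1 / \<alpha> i * inner (A (uin k) - A udag) (z - A (uin i))) - inner (S (uin k) - S udag) w"
    unfolding lam_def integral_mult_lam_in[OF A(2) dL] is_adjoint_integral[OF S(2) dL]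
    using L2_bounded_linear_diff[OF A(1) L2(1,2)] L2_bounded_linear_diff[OF S(1) L2(1,2)]
    by (simp add: d_def)
  finally show ?thesis by (simp add: d_def)
qed

lemma bregman_error_sum:
  fixes S A :: "(real^'n \<Rightarrow> real) \<Rightarrow> 'y::real_inner"
  assumes S: "L2_bounded_linear \<Omega> S" "is_adjoint \<Omega> S Sadj"
    and A: "L2_bounded_linear \<Omega> A" "is_adjoint \<Omega> A Aadj"
    and ua: "ua \<in> borel_measurable (lebesgue_on \<Omega>)" and ub: "ub \<in> borel_measurable (lebesgue_on \<Omega>)"
    and ab: "AE x in lebesgue_on \<Omega>. ua x \<le> ub x"
    and ud: "udag \<in> Uad \<Omega> ua ub" and src: "AE x in lebesgue_on \<Omega>. udag x = clip ua ub (Sadj w) x"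
    and min: "\<And>u. u \<in> Uad \<Omega> ua ub \<Longrightarrow> norm (S udag - z) \<le> norm (S u - z)"
    and d: "\<And>u. u \<in> Uad \<Omega> ua ub \<Longrightarrow> norm (S u - A u) \<le> d" "0 \<le> d" "d \<le> 1"
    and \<alpha>: "\<And>k. k \<ge> 1 \<Longrightarrow> \<alpha> k > 0" and alg: "inexact_bregman \<Omega> ua ub A Aadj z \<alpha> (\<lambda>k. 0) uin"
  shows "(\<Sum>k=1..K. 1 / \<alpha> k * (L2norm \<Omega> (\<lambda>x. uin k x - udag x))\<^sup>2) \<le> (norm w)\<^sup>2 / 2
    + d * (\<Sum>k=1..K. 2 / \<alpha> k * (gam \<alpha> k * norm (z - S udag) + norm w) + (gam \<alpha> k)\<^sup>2 / 2)"
proof -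
  have uU: "uin k \<in> Uad \<Omega> ua ub" if "k \<ge> 1" for k
    using alg that by (simp add: inexact_bregman_def)
  have "(\<Sum>k=1..K. 1 / \<alpha> k * (L2norm \<Omega> (\<lambda>x. uin k x - udag x))\<^sup>2) \<le> (norm w)\<^sup>2 / 2
    + (\<Sum>k=1..K. 2 * d * (1 / \<alpha> k) * (gam \<alpha> k * norm (z - S udag) + norm w) + (gam \<alpha> k * d)\<^sup>2 / 2)"
    unfolding gam_def
  proof (rule telescoped_energy_estimate)
    show "norm (S udag - A udag) \<le> d" using d(1)[OF ud] .
    fix k :: nat assume k: "k \<ge> 1"
    show "0 \<le> 1 / \<alpha> k" using \<alpha>[OF k] by simp
    show "norm (S (uin k) - A (uin k)) \<le> d" using d(1)[OF uU[OF k]] .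
    show "0 \<le> inner (z - S udag) (S udag - S (uin k))"
      using minimizer_variational_inequality[OF S(1) ud uU[OF k] min] .
    show "(L2norm \<Omega> (\<lambda>x. uin k x - udag x))\<^sup>2 \<le>
      (\<Sum>i=1..k. 1 / \<alpha> i * inner (A (uin k) - A udag) (z - A (uin i))) - inner (S (uin k) - S udag) w"
      using bregman_iterate_error[OF S A ua ub ab ud src \<alpha>[OF k] alg k] .
  qed
  also have "\<dots> \<le> (norm w)\<^sup>2 / 2
    + d * (\<Sum>k=1..K. 2 / \<alpha> k * (gam \<alpha> k * norm (z - S udag) + norm w) + (gam \<alpha> k)\<^sup>2 / 2)"
  proof -
    have "d\<^sup>2 \<le> d" using d(2,3) by (simp add: power2_eq_square mult_left_le)
    then have "(gam \<alpha> k * d)\<^sup>2 \<le> (gam \<alpha> k)\<^sup>2 * d" for k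
      by (simp add: power_mult_distrib mult_left_mono)
    then show ?thesis
      by (simp add: sum_distrib_left algebra_simps sum_mono)
  qed
  finally show ?thesis .
qed

section \<open>A stopping rule\<close>

lemma Hterm_nonneg:
  assumes "\<And>k. k \<ge> 1 \<Longrightarrow> \<alpha> k > 0" "i \<ge> 1" "d \<ge> 0"
  shows "Hterm \<alpha> d i \<ge> 0"
proof -
  have "\<alpha> i > 0" "gam \<alpha> (i - 1) \<ge> 0"
    using assms unfolding gam_def by (auto intro!: sum_nonneg simp: less_imp_le)
  then show ?thesis using assms(3) unfolding Hterm_def rho_def by simp
qed

lemma Hterm_sum_le:
  assumes \<alpha>: "\<And>k. k \<ge> 1 \<Longrightarrow> \<alpha> k > 0" and d: "0 \<le> d" "d \<le> 1"
  shows "(\<Sum>i=1..K. Hterm \<alpha> d i) \<le> d * (\<Sum>i=1..K. Hterm \<alpha> 1 i)"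
  unfolding sum_distrib_left
proof (rule sum_mono)
  fix i assume "i \<in> {1..K}"
  define X where "X = rho \<alpha> i / \<alpha> i + gam \<alpha> (i - 1) / \<alpha> i + gam \<alpha> (i - 1) * rho \<alpha> i / \<alpha> i"
  define Y where "Y = (rho \<alpha> i)\<^sup>2 / (\<alpha> i)\<^sup>2 + (rho \<alpha> i)\<^sup>2 / \<alpha> i"
  have "Y \<ge> 0" using \<alpha> \<open>i \<in> {1..K}\<close> by (simp add: Y_def less_imp_le)
  moreover have "d\<^sup>2 \<le> d" using d by (simp add: power2_eq_square mult_left_le)
  ultimately have "d\<^sup>2 * Y \<le> d * Y" by (rule mult_right_mono[rotated])
  moreover have "Hterm \<alpha> e i = e * X + e\<^sup>2 * Y" for e unfolding Hterm_def X_def Y_def by simp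
  ultimately show "Hterm \<alpha> d i \<le> d * Hterm \<alpha> 1 i" by (simp add: algebra_simps)
qed

lemma tendsto_at_right_0_of_continuous_on:
  fixes \<delta> :: "real \<Rightarrow> real"
  assumes "continuous_on {0..} \<delta>" "\<delta> 0 = 0"
  shows "(\<delta> \<longlongrightarrow> 0) (at_right 0)"
proof -
  have "(\<delta> \<longlongrightarrow> \<delta> 0) (at 0 within {0..})" using assms(1) by (simp add: continuous_on_def)
  then show ?thesis using assms(2) by (auto elim: tendsto_within_subset)
qed

lemma exists_slow_index:
  fixes \<delta> :: "real \<Rightarrow> real" and \<Phi> :: "nat \<Rightarrow> real"
  assumes \<delta>: "(\<delta> \<longlongrightarrow> 0) (at_right 0)"
  shows "\<exists>N :: real \<Rightarrow> nat. (\<forall>h. N h \<noteq> 0 \<longrightarrow> \<bar>\<delta> h\<bar> \<le> 1 \<and> \<delta> h * \<Phi> (N h) \<le> 1)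
    \<and> filterlim N at_top (at_right 0)"
proof -
  \<comment> \<open>The cap \<open>nat \<lfloor>1 / h\<rfloor>\<close> only serves to make \<open>A h\<close> finite.\<close>
  define A where "A h = {n. n \<le> nat \<lfloor>1 / h\<rfloor> \<and> (n = 0 \<or> \<bar>\<delta> h\<bar> \<le> 1 \<and> \<delta> h * \<Phi> n \<le> 1)}" for h
  define N where "N h = Max (A h)" for h
  have fin: "finite (A h)" for h
    by (rule finite_subset[of _ "{..nat \<lfloor>1 / h\<rfloor>}"]) (auto simp: A_def)
  have "0 \<in> A h" for h by (simp add: A_def)
  then have N: "N h \<in> A h" "n \<in> A h \<Longrightarrow> n \<le> N h" for h n
    using fin unfolding N_def by (auto intro: Max_in)
  have "eventually (\<lambda>h. m \<in> A h) (at_right 0)" for m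
  proof -
    have "eventually (\<lambda>h. \<bar>\<delta> h\<bar> < 1 / (\<bar>\<Phi> m\<bar> + 1)) (at_right 0)"
      using \<delta> by (intro order_tendstoD(2)[of "\<lambda>h. \<bar>\<delta> h\<bar>"]) (auto intro: tendsto_rabs_zero)
    moreover have "eventually (\<lambda>h. 0 < h \<and> h < 1 / (real m + 1)) (at_right 0)"
      unfolding eventually_at_right_field by (intro exI[of _ "1 / (real m + 1)"]) auto
    ultimately show ?thesis
    proof eventually_elim
      case (elim h)
      then have "real m \<le> 1 / h" by (simp add: field_simps)
      moreover have "\<delta> h * \<Phi> m \<le> \<bar>\<delta> h\<bar> * (\<bar>\<Phi> m\<bar> + 1)"
        using abs_ge_self[of "\<delta> h * \<Phi> m"] mult_left_mono[of "\<bar>\<Phi> m\<bar>" "\<bar>\<Phi> m\<bar> + 1" "\<bar>\<delta> h\<bar>"]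
        by (simp add: abs_mult)
      moreover have "1 / (\<bar>\<Phi> m\<bar> + 1) \<le> 1" by simp
      then have "\<bar>\<delta> h\<bar> \<le> 1" using elim by linarith
      ultimately show ?case
        using elim by (auto simp: A_def le_nat_floor field_simps)
    qed
  qed
  then have "filterlim N at_top (at_right 0)"
    unfolding filterlim_at_top by (metis (mono_tags, lifting) N(2) eventually_mono)
  moreover have "N h \<noteq> 0 \<longrightarrow> \<bar>\<delta> h\<bar> \<le> 1 \<and> \<delta> h * \<Phi> (N h) \<le> 1" for h
    using N(1)[of h] unfolding A_def by auto
  ultimately show ?thesis by blast
qed

lemma exists_index_le_weighted_average:
  fixes E \<alpha> :: "nat \<Rightarrow> real"
  assumes N: "N \<ge> 1" and \<alpha>: "\<And>k. k \<ge> 1 \<Longrightarrow> 0 < \<alpha> k \<and> \<alpha> k \<le> M"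
    and E: "\<And>k. E k \<ge> 0" and sum: "(\<Sum>k=1..2*N. 1 / \<alpha> k * E k) \<le> B"
  shows "\<exists>k. N < k \<and> k \<le> 2*N \<and> E k * real N \<le> M * B"
proof (rule ccontr)
  assume none: "\<not> ?thesis"
  have lt: "B / real N < 1 / \<alpha> k * E k" if k: "k \<in> {N<..2*N}" for k
  proof -
    have "0 < \<alpha> k" "\<alpha> k \<le> M" "M * B < E k * real N" using \<alpha>[of k] k none by auto
    then have "B / real N < E k / M" using N by (simp add: field_simps)
    also have "E k / M \<le> E k / \<alpha> k" using \<alpha>[of k] k E[of k] by (intro divide_left_mono) auto
    finally show ?thesis by simp
  qed
  have "B = (\<Sum>k\<in>{N<..2*N}. B / real N)" using N by simp
  also have "\<dots> < (\<Sum>k\<in>{N<..2*N}. 1 / \<alpha> k * E k)"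
    using N by (intro sum_strict_mono lt) auto
  also have "\<dots> \<le> (\<Sum>k=1..2*N. 1 / \<alpha> k * E k)"
    using \<alpha> E by (intro sum_mono2) (auto simp: less_imp_le)
  finally show False using sum by simp
qed

lemma tendsto_0_of_power2_mult_le:
  fixes e :: "'a \<Rightarrow> real" and N :: "'a \<Rightarrow> nat"
  assumes N: "filterlim N at_top F" and e: "\<And>x. e x \<ge> 0"
    and bound: "eventually (\<lambda>x. (e x)\<^sup>2 * real (N x) \<le> C) F"
  shows "(e \<longlongrightarrow> 0) F"
proof (rule tendstoI)
  fix \<epsilon> :: real assume \<epsilon>: "\<epsilon> > 0"
  define m where "m = nat \<lceil>C / \<epsilon>\<^sup>2\<rceil> + 1"
  have "eventually (\<lambda>x. m \<le> N x) F" using N unfolding filterlim_at_top by blast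
  with bound show "eventually (\<lambda>x. dist (e x) 0 < \<epsilon>) F"
  proof eventually_elim
    case (elim x)
    have "C / \<epsilon>\<^sup>2 < real (N x)"
      using elim real_nat_ceiling_ge[of "C / \<epsilon>\<^sup>2"] unfolding m_def by linarith
    then have "(e x)\<^sup>2 * real (N x) < \<epsilon>\<^sup>2 * real (N x)"
      using elim \<epsilon> by (simp add: field_simps)
    then have "(e x)\<^sup>2 < \<epsilon>\<^sup>2" by (rule mult_right_less_imp_less) simp
    then show ?case using e[of x] \<epsilon> by (simp add: power_less_imp_less_base)
  qed
qed

lemma stopping_rule:
  fixes e H :: "real \<Rightarrow> nat \<Rightarrow> real" and N :: "real \<Rightarrow> nat" and \<alpha> :: "nat \<Rightarrow> real"
  assumes \<alpha>: "\<And>k. k \<ge> 1 \<Longrightarrow> 0 < \<alpha> k \<and> \<alpha> k \<le> M"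
    and e: "\<And>h k. e h k \<ge> 0" and H: "\<And>h i. 0 < h \<Longrightarrow> i \<ge> 1 \<Longrightarrow> H h i \<ge> 0"
    and C: "C \<ge> 0" and hmax: "hmax > 0"
    and bound: "\<And>h. 0 < h \<Longrightarrow> h \<le> hmax \<Longrightarrow> N h \<noteq> 0 \<Longrightarrow>
      (\<Sum>k=1..2 * N h. 1 / \<alpha> k * (e h k)\<^sup>2) \<le> B \<and> (\<Sum>i=1..2 * N h. H h i) \<le> C"
    and N: "filterlim N at_top (at_right 0)"
  shows "\<exists>kh :: real \<Rightarrow> nat. (\<forall>h. 0 < h \<and> h \<le> hmax \<longrightarrow> (\<Sum>i=1..kh h. H h i) \<le> C) \<and>
    filterlim kh at_top (at_right 0) \<and> ((\<lambda>h. e h (kh h)) \<longlongrightarrow> 0) (at_right 0)"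
proof -
  define good where "good h k \<longleftrightarrow> N h < k \<and> k \<le> 2 * N h \<and> (e h k)\<^sup>2 * real (N h) \<le> M * B" for h k
  define kh where "kh h = (if 0 < h \<and> h \<le> hmax \<and> N h \<noteq> 0 then SOME k. good h k else 0)" for h
  have kh: "good h (kh h)" if "0 < h" "h \<le> hmax" "N h \<noteq> 0" for h
  proof -
    have "\<exists>k. good h k"
      unfolding good_def using that bound[OF that] \<alpha>
      by (intro exists_index_le_weighted_average[of "N h" \<alpha> M "\<lambda>k. (e h k)\<^sup>2" B]) auto
    then show ?thesis using that unfolding kh_def by (simp add: someI_ex)
  qed
  have H_sum: "(\<Sum>i=1..kh h. H h i) \<le> C" if h: "0 < h" "h \<le> hmax" for h
  proof (cases "N h = 0")
    case True
    then show ?thesis using C by (simp add: kh_def)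
  next
    case False
    then have "(\<Sum>i=1..kh h. H h i) \<le> (\<Sum>i=1..2 * N h. H h i)"
      using kh[OF h False] H[OF h(1)] by (intro sum_mono2) (auto simp: good_def)
    then show ?thesis using bound[OF h False] by simp
  qed
  have ev: "eventually (\<lambda>h. good h (kh h)) (at_right 0)"
  proof -
    have "eventually (\<lambda>h. 1 \<le> N h) (at_right 0)"
      using N unfolding filterlim_at_top by blast
    moreover have "eventually (\<lambda>h. 0 < h \<and> h \<le> hmax) (at_right 0)"
      unfolding eventually_at_right_field using hmax by (intro exI[of _ hmax]) auto
    ultimately show ?thesis by eventually_elim (auto intro: kh)
  qed
  have "filterlim kh at_top (at_right 0)"
    using N by (rule filterlim_at_top_mono) (use ev in \<open>auto elim: eventually_mono simp: good_def\<close>)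
  moreover have "((\<lambda>h. e h (kh h)) \<longlongrightarrow> 0) (at_right 0)"
    by (rule tendsto_0_of_power2_mult_le[OF N e]) (use ev in \<open>auto elim: eventually_mono simp: good_def\<close>)
  ultimately show ?thesis using H_sum by blast
qed

theorem corollary4p3:
  fixes \<Omega> :: "(real^'n) set"
    and S :: "(real^'n \<Rightarrow> real) \<Rightarrow> 'y::{real_inner, complete_space}"
    and Sadj :: "'y \<Rightarrow> (real^'n \<Rightarrow> real)"
    and Sh :: "real \<Rightarrow> (real^'n \<Rightarrow> real) \<Rightarrow> 'y"
    and Shadj :: "real \<Rightarrow> 'y \<Rightarrow> (real^'n \<Rightarrow> real)"
    and z :: 'y and ua ub udag :: "real^'n \<Rightarrow> real"
    and \<delta> :: "real \<Rightarrow> real" and \<alpha> :: "nat \<Rightarrow> real" and hmax :: real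
  assumes \<Omega>: "\<Omega> \<in> sets lebesgue" "bounded \<Omega>"
    and S: "L2_bounded_linear \<Omega> S" "is_adjoint \<Omega> S Sadj"
    and uab: "ua \<in> Linfty \<Omega>" "ub \<in> Linfty \<Omega>" "AE x in lebesgue_on \<Omega>. ua x \<le> ub x"
    and Sh: "\<And>h. h > 0 \<Longrightarrow> L2_bounded_linear \<Omega> (Sh h) \<and> is_adjoint \<Omega> (Sh h) (Shadj h) \<and>
                 (\<exists>B. finite B \<and> Sh h ` L2 \<Omega> \<subseteq> span B)"
    and \<delta>: "continuous_on {0..} \<delta>" "mono_on {0..} \<delta>" "\<And>h. h \<ge> 0 \<Longrightarrow> \<delta> h \<ge> 0" "\<delta> 0 = 0"
    and \<delta>_bound: "\<And>h uh. h \<ge> 0 \<Longrightarrow> uh \<in> Uad \<Omega> ua ub \<Longrightarrow>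
        norm (S uh - Sh h uh) + L2norm \<Omega> (\<lambda>x. Sadj (Sh h uh - z) x - Shadj h (Sh h uh - z) x) \<le> \<delta> h"
    and \<alpha>: "\<And>k. k \<ge> 1 \<Longrightarrow> \<alpha> k > 0" "\<exists>M. \<forall>k\<ge>1. \<alpha> k \<le> M"
    and udag_sol: "udag \<in> Uad \<Omega> ua ub"
      "\<And>u. u \<in> Uad \<Omega> ua ub \<Longrightarrow> (1/2) * (norm (S udag - z))^2 \<le> (1/2) * (norm (S u - z))^2"
    and source: "\<exists>w. L2norm \<Omega> (\<lambda>x. udag x - PUad \<Omega> ua ub (Sadj w) x) = 0"
    and hmax: "hmax > 0"
    and alg: "\<And>h. 0 < h \<Longrightarrow> h \<le> hmax \<Longrightarrow>
        inexact_bregman \<Omega> ua ub (Sh h) (Shadj h) z \<alpha> (\<lambda>k. 0) (uin h)"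
  shows "\<exists>C::real. \<exists>kh :: real \<Rightarrow> nat.
           (\<forall>h. 0 < h \<and> h \<le> hmax \<longrightarrow> (\<Sum>i=1..kh h. Hterm \<alpha> (\<delta> h) i) \<le> C) \<and>
           filterlim kh at_top (at_right 0) \<and>
           ((\<lambda>h. L2norm \<Omega> (\<lambda>x. uin h (kh h) x - udag x)) \<longlongrightarrow> 0) (at_right 0)"
proof -
  obtain w where w: "L2norm \<Omega> (\<lambda>x. udag x - PUad \<Omega> ua ub (Sadj w) x) = 0"
    using source by blast
  obtain M where M: "\<And>k. k \<ge> 1 \<Longrightarrow> 0 < \<alpha> k \<and> \<alpha> k \<le> M"
    using \<alpha> by blast
  have ua: "ua \<in> borel_measurable (lebesgue_on \<Omega>)" and ub: "ub \<in> borel_measurable (lebesgue_on \<Omega>)"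
    using uab by (simp_all add: Linfty_def)
  have src: "AE x in lebesgue_on \<Omega>. udag x = clip ua ub (Sadj w) x"
    using udag_sol(1) S(2) w by (intro AE_eq_clip_of_L2norm_le_0 ua ub) (auto simp: Uad_def is_adjoint_def)
  have min: "norm (S udag - z) \<le> norm (S u - z)" if "u \<in> Uad \<Omega> ua ub" for u
    using udag_sol(2)[OF that] by (simp add: power_mono_iff)
  define G where "G K = (\<Sum>k=1..K. 2 / \<alpha> k * (gam \<alpha> k * norm (z - S udag) + norm w) + (gam \<alpha> k)\<^sup>2 / 2)" for K
  define \<Phi> where "\<Phi> n = max (\<Sum>i=1..2 * n. Hterm \<alpha> 1 i) (G (2 * n))" for n
  obtain N where N: "\<And>h. N h \<noteq> 0 \<Longrightarrow> \<bar>\<delta> h\<bar> \<le> 1 \<and> \<delta> h * \<Phi> (N h) \<le> 1"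
    "filterlim N at_top (at_right 0)"
    using exists_slow_index[OF tendsto_at_right_0_of_continuous_on[OF \<delta>(1,4)], of \<Phi>] by blast
  have bound: "(\<Sum>k=1..2 * N h. 1 / \<alpha> k * (L2norm \<Omega> (\<lambda>x. uin h k x - udag x))\<^sup>2) \<le> (norm w)\<^sup>2 / 2 + 1
      \<and> (\<Sum>i=1..2 * N h. Hterm \<alpha> (\<delta> h) i) \<le> 1"
    if h: "0 < h" "h \<le> hmax" "N h \<noteq> 0" for h
  proof -
    have d: "0 \<le> \<delta> h" "\<delta> h \<le> 1" using \<delta>(3) h(1) N(1)[OF h(3)] by simp_all
    have budget: "\<delta> h * (\<Sum>i=1..2 * N h. Hterm \<alpha> 1 i) \<le> 1" "\<delta> h * G (2 * N h) \<le> 1"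
      using N(1)[OF h(3)] mult_left_mono[OF max.cobounded1 d(1)] mult_left_mono[OF max.cobounded2 d(1)]
      unfolding \<Phi>_def by (meson order_trans)+
    have err: "norm (S u - Sh h u) \<le> \<delta> h" if "u \<in> Uad \<Omega> ua ub" for u
      using \<delta>_bound[OF _ that, of h] h(1)
        L2norm_nonneg[of \<Omega> "\<lambda>x. Sadj (Sh h u - z) x - Shadj h (Sh h u - z) x"] by linarith
    have "(\<Sum>k=1..2 * N h. 1 / \<alpha> k * (L2norm \<Omega> (\<lambda>x. uin h k x - udag x))\<^sup>2) \<le> (norm w)\<^sup>2 / 2 + \<delta> h * G (2 * N h)"
      unfolding G_def using Sh[OF h(1)]
      by (intro bregman_error_sum[OF S _ _ ua ub uab(3) udag_sol(1) src min err d \<alpha>(1) alg[OF h(1,2)]]) auto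
    moreover have "(\<Sum>i=1..2 * N h. Hterm \<alpha> (\<delta> h) i) \<le> \<delta> h * (\<Sum>i=1..2 * N h. Hterm \<alpha> 1 i)"
      using \<alpha>(1) d by (rule Hterm_sum_le)
    ultimately show ?thesis using budget by linarith
  qed
  show ?thesis
    by (rule exI, rule stopping_rule[where e = "\<lambda>h k. L2norm \<Omega> (\<lambda>x. uin h k x - udag x)",
          OF M L2norm_nonneg _ zero_le_one hmax bound N(2)])
      (use Hterm_nonneg[of \<alpha>, OF \<alpha>(1)] \<delta>(3) in auto)
qed

end
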